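(* Assume there exists $\Delta_{\min}^{\mathcal P}>0$ such that for every truth $p\in\mathcal P$, $a_p(X)$ is unique and $R_p(X,a_p(X))-\sup_{a\in S_X,\,a\neq a_p(X)}R_p(X,a)\ge\Delta_{\min}^{\mathcal P}$ holds $d_0$-a.s. Then for every $p,q\in\mathcal P$, \[ \Delta_{\min}^{\mathcal P}\,d_0\{a_q\neq a_p\}\le\mathcal G_p(R_q)\le\Delta_{\max}^{\mathcal P}\,d_0\{a_q\neq a_p\}. \]
   Context: $\mathcal X$ is a context space with distribution $d_0$; $\mathcal A$ is a separable metric action space; $\pi_0$ is a reference policy and $S_x:=\mathrm{supp}(\pi_0(\cdot\mid x))$. $\mathcal P$ is a compact class of truths, each $p\in\mathcal P$ inducing a $\pi_0$-centered measurable reward $R_p:\mathcal X\times\mathcal A\to\mathbb R$. For a reward $R$, $a_R(x)$ is a measurable selector in $\arg\max_{a\in S_x}R(x,a)$ (fixed measurable tie-breaking), and $a_p:=a_{R_p}$. The temperature-zero regret is $\mathcal G_p(R):=\mathbb E_{X\sim d_0}[R_p(X,a_p(X))-R_p(X,a_R(X))]$. Also $\Delta_{\max}^{\mathcal P}:=\sup_{p\in\mathcal P}\sup_{x\in\mathcal X}\sup_{a\in S_x}(R_p(x,a_p(x))-R_p(x,a))$. *)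

theory Defs
  imports "HOL-Probability.Probability"
begin

definition policy_support :: "('x \<Rightarrow> 'a::metric_space measure) \<Rightarrow> 'x \<Rightarrow> 'a set" where
  "policy_support \<pi> x = {a. \<forall>e>0. emeasure (\<pi> x) (ball a e) > 0}"

definition is_argmax_selector :: "('x \<Rightarrow> 'a set) \<Rightarrow> ('x \<Rightarrow> 'a \<Rightarrow> real) \<Rightarrow> ('x \<Rightarrow> 'a) \<Rightarrow> bool" where
  "is_argmax_selector S R a_sel \<longleftrightarrow> (\<forall>x. a_sel x \<in> S x \<and> (\<forall>a\<in>S x. R x a \<le> R x (a_sel x)))"

text \<open>Temperature-zero regret G_p(R) = E_{d0}[R_p(X,a_p X) - R_p(X,a_R X)] (integrand is nonnegative,
  taken as a nonnegative Lebesgue integral).\<close>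
definition tz_regret :: "'x measure \<Rightarrow> ('x \<Rightarrow> 'a \<Rightarrow> real) \<Rightarrow> ('x \<Rightarrow> 'a) \<Rightarrow> ('x \<Rightarrow> 'a) \<Rightarrow> ennreal" where
  "tz_regret d0 Rp ap aR = (\<integral>\<^sup>+ x. ennreal (Rp x (ap x) - Rp x (aR x)) \<partial>d0)"

definition Delta_max :: "'p set \<Rightarrow> 'x measure \<Rightarrow> ('x \<Rightarrow> 'a set) \<Rightarrow> ('p \<Rightarrow> 'x \<Rightarrow> 'a \<Rightarrow> real) \<Rightarrow> ('p \<Rightarrow> 'x \<Rightarrow> 'a) \<Rightarrow> ennreal" where
  "Delta_max P d0 S R ap = (SUP p\<in>P. SUP x\<in>space d0. SUP a\<in>S x. ennreal (R p x (ap p x) - R p x a))"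

end

theory Submission
  imports Defs
begin

text \<open>Pointwise, the regret integrand vanishes where the two selectors agree. Where they
  disagree, a_q(x) is a competitor in S_x other than a_p(x), so the margin condition bounds
  the integrand below by \<Delta>min, and the definition of Delta_max bounds it above. Integrating
  these bounds over the disagreement set gives the two inequalities.\<close>

lemma nn_integral_ge_cmult_emeasure:
  assumes "A \<in> sets M" and "AE x in M. x \<in> A \<longrightarrow> c \<le> f x"
  shows "c * emeasure M A \<le> (\<integral>\<^sup>+ x. f x \<partial>M)"
proof -
  have "c * emeasure M A = (\<integral>\<^sup>+ x. c * indicator A x \<partial>M)"
    using assms(1) by (simp add: nn_integral_cmult_indicator)
  also have "\<dots> \<le> (\<integral>\<^sup>+ x. f x \<partial>M)"
    using assms(2) by (intro nn_integral_mono_AE) (auto elim!: eventually_mono split: split_indicator)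
  finally show ?thesis .
qed

lemma nn_integral_le_cmult_emeasure:
  assumes "A \<in> sets M"
    and "\<And>x. x \<in> A \<Longrightarrow> f x \<le> c"
    and "\<And>x. x \<in> space M - A \<Longrightarrow> f x = 0"
  shows "(\<integral>\<^sup>+ x. f x \<partial>M) \<le> c * emeasure M A"
proof -
  have "(\<integral>\<^sup>+ x. f x \<partial>M) \<le> (\<integral>\<^sup>+ x. c * indicator A x \<partial>M)"
    using assms(2,3) by (intro nn_integral_mono) (auto split: split_indicator)
  also have "\<dots> = c * emeasure M A"
    using assms(1) by (simp add: nn_integral_cmult_indicator)
  finally show ?thesis .
qed

lemma tz_regret_ge_margin_emeasure:
  assumes "{x \<in> space d0. aR x \<noteq> ap x} \<in> sets d0"
    and "\<And>x. aR x \<in> S x"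
    and "AE x in d0. \<forall>a\<in>S x. a \<noteq> ap x \<longrightarrow> Rp x a \<le> Rp x (ap x) - \<Delta>"
  shows "ennreal \<Delta> * emeasure d0 {x \<in> space d0. aR x \<noteq> ap x} \<le> tz_regret d0 Rp ap aR"
  unfolding tz_regret_def
proof (rule nn_integral_ge_cmult_emeasure[OF assms(1)])
  show "AE x in d0. x \<in> {x \<in> space d0. aR x \<noteq> ap x} \<longrightarrow>
      ennreal \<Delta> \<le> ennreal (Rp x (ap x) - Rp x (aR x))"
    using assms(3)
  proof eventually_elim
    case (elim x)
    show ?case
      using elim[rule_format, OF assms(2)] by (auto intro: ennreal_leI)
  qed
qed

lemma gap_le_Delta_max:
  assumes "p \<in> P" and "x \<in> space d0" and "a \<in> S x"
  shows "ennreal (R p x (ap p x) - R p x a) \<le> Delta_max P d0 S R ap"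
proof -
  have "ennreal (R p x (ap p x) - R p x a) \<le> (SUP a\<in>S x. ennreal (R p x (ap p x) - R p x a))"
    using assms(3) by (rule SUP_upper)
  also have "\<dots> \<le> (SUP x\<in>space d0. SUP a\<in>S x. ennreal (R p x (ap p x) - R p x a))"
    using assms(2) by (rule SUP_upper)
  also have "\<dots> \<le> Delta_max P d0 S R ap"
    unfolding Delta_max_def using assms(1) by (rule SUP_upper)
  finally show ?thesis .
qed

lemma tz_regret_le_Delta_max_emeasure:
  assumes "p \<in> P"
    and "{x \<in> space d0. aR x \<noteq> ap p x} \<in> sets d0"
    and "\<And>x. aR x \<in> S x"
  shows "tz_regret d0 (R p) (ap p) aR \<le> Delta_max P d0 S R ap * emeasure d0 {x \<in> space d0. aR x \<noteq> ap p x}"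
  unfolding tz_regret_def
  by (rule nn_integral_le_cmult_emeasure[OF assms(2)]) (auto intro: gap_le_Delta_max assms(1,3))

theorem lemma11:
  fixes d0 :: "'x measure"
    and \<pi>0 :: "'x \<Rightarrow> ('a::{metric_space, second_countable_topology}) measure"
    and P :: "'p::topological_space set"
    and R :: "'p \<Rightarrow> 'x \<Rightarrow> 'a \<Rightarrow> real"
    and sel :: "('x \<Rightarrow> 'a \<Rightarrow> real) \<Rightarrow> 'x \<Rightarrow> 'a"
    and \<Delta>min :: real
  defines "S \<equiv> policy_support \<pi>0"
  assumes d0: "prob_space d0"
    and pi0: "\<And>x. prob_space (\<pi>0 x)" "\<And>x. sets (\<pi>0 x) = sets borel"
    and P_compact: "compact P"
    and R_meas: "\<And>p. p \<in> P \<Longrightarrow> (\<lambda>(x, a). R p x a) \<in> borel_measurable (d0 \<Otimes>\<^sub>M borel)"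
    and R_centered: "\<And>p x. p \<in> P \<Longrightarrow> integrable (\<pi>0 x) (R p x) \<and> (\<integral>a. R p x a \<partial>\<pi>0 x) = 0"
    and sel_argmax: "\<And>p. p \<in> P \<Longrightarrow> is_argmax_selector S (R p) (sel (R p))"
    and sel_meas: "\<And>p. p \<in> P \<Longrightarrow> sel (R p) \<in> d0 \<rightarrow>\<^sub>M borel"
    and Dmin_pos: "\<Delta>min > 0"
    and margin: "\<And>p. p \<in> P \<Longrightarrow> AE x in d0.
        (\<forall>a\<in>S x. R p x a = R p x (sel (R p) x) \<longrightarrow> a = sel (R p) x)
      \<and> (\<forall>a\<in>S x. a \<noteq> sel (R p) x \<longrightarrow> R p x a \<le> R p x (sel (R p) x) - \<Delta>min)"
    and p: "p \<in> P" and q: "q \<in> P"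
  shows "ennreal \<Delta>min * emeasure d0 {x \<in> space d0. sel (R q) x \<noteq> sel (R p) x}
           \<le> tz_regret d0 (R p) (sel (R p)) (sel (R q))
       \<and> tz_regret d0 (R p) (sel (R p)) (sel (R q))
           \<le> Delta_max P d0 S R (\<lambda>p. sel (R p)) * emeasure d0 {x \<in> space d0. sel (R q) x \<noteq> sel (R p) x}"
proof -
  have disagreement_sets: "{x \<in> space d0. sel (R q) x \<noteq> sel (R p) x} \<in> sets d0"
    using sel_meas[OF p] sel_meas[OF q] by measurable
  have aq_in_support: "\<And>x. sel (R q) x \<in> S x"
    using sel_argmax[OF q] unfolding is_argmax_selector_def by blast
  have gap: "AE x in d0. \<forall>a\<in>S x. a \<noteq> sel (R p) x \<longrightarrow> R p x a \<le> R p x (sel (R p) x) - \<Delta>min"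
    using margin[OF p] by (rule eventually_mono) blast
  show ?thesis
    using tz_regret_ge_margin_emeasure[OF disagreement_sets aq_in_support gap]
      tz_regret_le_Delta_max_emeasure[where ap = "\<lambda>p. sel (R p)", OF p disagreement_sets aq_in_support]
    by blast
qed

end
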